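(* Let $\mu,\nu\in\mathbb{R}$. Identify $\mathbb{R}[[\tau]]$ with $\mathbb{R}[[\sigma]]$ via $\tau\mapsto\sigma$. Then the assignment $$H\mapsto P,\quad P\mapsto H,\quad K\mapsto K,\quad D\mapsto D,\quad C_1\mapsto -C_2,\quad C_2\mapsto -C_1$$ extends to an isomorphism of algebras $U_\tau(so_{\mu,\nu}(2,2))\to U_\sigma(so_{\nu,\mu}(2,2))$ which intertwines the coproducts, i.e. an isomorphism of bialgebras.
   Context: For real parameters $a,b$: $U_\tau(so_{a,b}(2,2))$ is the $\tau$-adically completed algebra over $\mathbb{R}[[\tau]]$ generated by $H,P,K,D,C_1,C_2$ with relations $[K,H]=b e^{-\tau H}P$, $[K,P]=a\frac{e^{\tau H}-1}{\tau}$, $[H,P]=0$, $[K,D]=0$, $[D,H]=\frac{1-e^{-\tau H}}{\tau}$, $[D,C_1]=-C_1+\tau b D^2$, $[H,C_1]=-2bD$, $[D,P]=P$, $[D,C_2]=-C_2$, $[P,C_2]=2aD$, $[K,C_1]=bC_2$, $[K,C_2]=aC_1-\tau abD^2$, $[H,C_2]=e^{-\tau H}K+Ke^{-\tau H}$, $[P,C_1]=-2K-\tau b(DP+PD)$, $[C_1,C_2]=-\tau b(DC_2+C_2D)$, and coproduct $\Delta(H)=1\otimes H+H\otimes 1$, $\Delta(D)=1\otimes D+D\otimes e^{-\tau H}$, $\Delta(P)=1\otimes P+P\otimes e^{\tau H}$, $\Delta(C_1)=1\otimes C_1+C_1\otimes e^{-\tau H}$, $\Delta(K)=1\otimes K+K\otimes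 1-\tau bD\otimes e^{-\tau H}P$, $\Delta(C_2)=1\otimes C_2+C_2\otimes e^{-\tau H}+2\tau D\otimes e^{-\tau H}K-\tau^2b(D^2+D)\otimes e^{-2\tau H}P$. $U_\sigma(so_{a,b}(2,2))$ is the $\sigma$-adically completed algebra over $\mathbb{R}[[\sigma]]$ generated by $H,P,K,D,C_1,C_2$ with relations $[K,H]=b\frac{e^{\sigma P}-1}{\sigma}$, $[K,P]=ae^{-\sigma P}H$, $[H,P]=0$, $[K,D]=0$, $[D,H]=H$, $[D,C_1]=-C_1$, $[H,C_1]=-2bD$, $[D,P]=\frac{1-e^{-\sigma P}}{\sigma}$, $[D,C_2]=-C_2-\sigma aD^2$, $[P,C_2]=2aD$, $[K,C_1]=bC_2+\sigma abD^2$, $[K,C_2]=aC_1$, $[P,C_1]=-e^{-\sigma P}K-Ke^{-\sigma P}$, $[H,C_2]=2K+\sigma a(DH+HD)$, $[C_1,C_2]=-\sigma a(DC_1+C_1D)$, and coproduct $\Delta(P)=1\otimes P+P\otimes 1$, $\Delta(D)=1\otimes D+D\otimes e^{-\sigma P}$, $\Delta(H)=1\otimes H+H\otimes e^{\sigma P}$, $\Delta(C_2)=1\otimes C_2+C_2\otimes e^{-\sigma P}$, $\Delta(K)=1\otimes K+K\otimes 1-\sigma aD\otimes e^{-\sigma P}H$, $\Delta(C_1)=1\otimes C_1+C_1\otimes e^{-\sigma P}-2\sigma D\otimes e^{-\sigma P}K+\sigma^2a(D^2+D)\otimes e^{-2\sigma P}H$. *)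

theory Defs
  imports Complex_Main
begin

datatype gen = Hg | Pg | Kg | Dg | C1g | C2g

text \<open>An element is written as a formal sum over n and words w of coefficients
  F n w times t^n w, where t is the central formal parameter (tau resp. sigma, identified).
  The tau-adic completion of the free R[[t]]-algebra consists of those F such that for
  each n only finitely many words have nonzero coefficient.\<close>

type_synonym ncps = "nat \<Rightarrow> gen list \<Rightarrow> real"

definition Alg :: "ncps set" where
  "Alg = {F. \<forall>n. finite {w. F n w \<noteq> 0}}"

definition pzero :: ncps where "pzero = (\<lambda>n w. 0)"
definition pone :: ncps where "pone = (\<lambda>n w. if n = 0 \<and> w = [] then 1 else 0)"
definition padd :: "ncps \<Rightarrow> ncps \<Rightarrow> ncps" where "padd F G = (\<lambda>n w. F n w + G n w)"
definition psub :: "ncps \<Rightarrow> ncps \<Rightarrow> ncps" where "psub F G = (\<lambda>n w. F n w - G n w)"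
definition pscal :: "real \<Rightarrow> ncps \<Rightarrow> ncps" where "pscal c F = (\<lambda>n w. c * F n w)"
definition pmul :: "ncps \<Rightarrow> ncps \<Rightarrow> ncps" where
  "pmul F G = (\<lambda>n w. \<Sum>i\<le>n. \<Sum>k\<le>length w. F i (take k w) * G (n - i) (drop k w))"

definition pgen :: "gen \<Rightarrow> ncps" where "pgen g = (\<lambda>n w. if n = 0 \<and> w = [g] then 1 else 0)"
definition ptau :: ncps where "ptau = (\<lambda>n w. if n = 1 \<and> w = [] then 1 else 0)"

text \<open>pexp c g is the series exp(c t g) = sum_n (c t g)^n / n!.\<close>
definition pexp :: "real \<Rightarrow> gen \<Rightarrow> ncps" where
  "pexp c g = (\<lambda>n w. if w = replicate n g then c ^ n / fact n else 0)"

text \<open>Division by t of an element whose t^0-part vanishes.\<close>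
definition pdivt :: "ncps \<Rightarrow> ncps" where "pdivt F = (\<lambda>n w. F (Suc n) w)"

definition pcomm :: "ncps \<Rightarrow> ncps \<Rightarrow> ncps" where "pcomm X Y = psub (pmul X Y) (pmul Y X)"

inductive_set ideal_span :: "ncps set \<Rightarrow> ncps set" for R where
  zero: "pzero \<in> ideal_span R"
| step: "\<lbrakk>a \<in> Alg; r \<in> R; b \<in> Alg; F \<in> ideal_span R\<rbrakk>
          \<Longrightarrow> padd (pmul (pmul a r) b) F \<in> ideal_span R"

definition tclosure :: "ncps set \<Rightarrow> ncps set" where
  "tclosure S = {F \<in> Alg. \<forall>N. \<exists>G\<in>S. \<forall>n<N. \<forall>w. F n w = G n w}"

definition relideal :: "ncps set \<Rightarrow> ncps set" where
  "relideal R = tclosure (ideal_span R)"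

definition congr :: "ncps set \<Rightarrow> (ncps \<times> ncps) set" where
  "congr R = {(x, y). x \<in> Alg \<and> y \<in> Alg \<and> psub x y \<in> relideal R}"

definition presented :: "ncps set \<Rightarrow> ncps set set" where
  "presented R = Alg // congr R"

definition wordval :: "(gen \<Rightarrow> ncps) \<Rightarrow> gen list \<Rightarrow> ncps" where
  "wordval f w = foldr (\<lambda>g acc. pmul (f g) acc) w pone"

definition ext1 :: "(gen \<Rightarrow> ncps) \<Rightarrow> ncps \<Rightarrow> ncps" where
  "ext1 f F = (\<lambda>m v. \<Sum>n\<le>m. \<Sum>w\<in>{w. F n w \<noteq> 0}. F n w * wordval f w (m - n) v)"

section \<open>Completed tensor square over R[[t]]\<close>

type_synonym ncps2 = "nat \<Rightarrow> gen list \<Rightarrow> gen list \<Rightarrow> real"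

definition Alg2 :: "ncps2 set" where
  "Alg2 = {F. \<forall>n. finite {(u, v). F n u v \<noteq> 0}}"

definition pzero2 :: ncps2 where "pzero2 = (\<lambda>n u v. 0)"
definition padd2 :: "ncps2 \<Rightarrow> ncps2 \<Rightarrow> ncps2" where "padd2 F G = (\<lambda>n u v. F n u v + G n u v)"
definition psub2 :: "ncps2 \<Rightarrow> ncps2 \<Rightarrow> ncps2" where "psub2 F G = (\<lambda>n u v. F n u v - G n u v)"
definition pmul2 :: "ncps2 \<Rightarrow> ncps2 \<Rightarrow> ncps2" where
  "pmul2 F G = (\<lambda>n u v. \<Sum>i\<le>n. \<Sum>k\<le>length u. \<Sum>l\<le>length v.
      F i (take k u) (take l v) * G (n - i) (drop k u) (drop l v))"

text \<open>Elementary tensor x \<otimes> y (over R[[t]], t central).\<close>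
definition tens :: "ncps \<Rightarrow> ncps \<Rightarrow> ncps2" where
  "tens F G = (\<lambda>n u v. \<Sum>i\<le>n. F i u * G (n - i) v)"

definition pone2 :: ncps2 where "pone2 = tens pone pone"

definition wordval2 :: "(gen \<Rightarrow> ncps2) \<Rightarrow> gen list \<Rightarrow> ncps2" where
  "wordval2 f w = foldr (\<lambda>g acc. pmul2 (f g) acc) w pone2"

definition ext2 :: "(gen \<Rightarrow> ncps2) \<Rightarrow> ncps \<Rightarrow> ncps2" where
  "ext2 f F = (\<lambda>m u v. \<Sum>n\<le>m. \<Sum>w\<in>{w. F n w \<noteq> 0}. F n w * wordval2 f w (m - n) u v)"

text \<open>Tensor product map f \<otimes> f of the algebra map extending f.\<close>
definition tensext :: "(gen \<Rightarrow> ncps) \<Rightarrow> ncps2 \<Rightarrow> ncps2" where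
  "tensext f F = (\<lambda>m a b. \<Sum>n\<le>m. \<Sum>p\<in>{(u, v). F n u v \<noteq> 0}.
      F n (fst p) (snd p) * tens (wordval f (fst p)) (wordval f (snd p)) (m - n) a b)"

inductive_set tideal_span :: "ncps set \<Rightarrow> ncps2 set" for I where
  zero: "pzero2 \<in> tideal_span I"
| left: "\<lbrakk>x \<in> I; y \<in> Alg; F \<in> tideal_span I\<rbrakk> \<Longrightarrow> padd2 (tens x y) F \<in> tideal_span I"
| right: "\<lbrakk>x \<in> Alg; y \<in> I; F \<in> tideal_span I\<rbrakk> \<Longrightarrow> padd2 (tens x y) F \<in> tideal_span I"

definition tclosure2 :: "ncps2 set \<Rightarrow> ncps2 set" where
  "tclosure2 S = {F \<in> Alg2. \<forall>N. \<exists>G\<in>S. \<forall>n<N. \<forall>u v. F n u v = G n u v}"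

text \<open>Kernel of A\<otimes>A \<rightarrow> U\<otimes>U (completed), i.e. closure of I\<otimes>A + A\<otimes>I.\<close>
definition tensideal :: "ncps set \<Rightarrow> ncps2 set" where
  "tensideal R = tclosure2 (tideal_span (relideal R))"

abbreviation "gH \<equiv> pgen Hg"
abbreviation "gP \<equiv> pgen Pg"
abbreviation "gK \<equiv> pgen Kg"
abbreviation "gD \<equiv> pgen Dg"
abbreviation "gC1 \<equiv> pgen C1g"
abbreviation "gC2 \<equiv> pgen C2g"

definition rel :: "ncps \<Rightarrow> ncps \<Rightarrow> ncps" where "rel l r = psub l r"

definition rels_tau :: "real \<Rightarrow> real \<Rightarrow> ncps set" where
  "rels_tau a b = {
     rel (pcomm gK gH) (pscal b (pmul (pexp (-1) Hg) gP)),
     rel (pcomm gK gP) (pscal a (pdivt (psub (pexp 1 Hg) pone))),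
     rel (pcomm gH gP) pzero,
     rel (pcomm gK gD) pzero,
     rel (pcomm gD gH) (pdivt (psub pone (pexp (-1) Hg))),
     rel (pcomm gD gC1) (padd (pscal (-1) gC1) (pscal b (pmul ptau (pmul gD gD)))),
     rel (pcomm gH gC1) (pscal (-2 * b) gD),
     rel (pcomm gD gP) gP,
     rel (pcomm gD gC2) (pscal (-1) gC2),
     rel (pcomm gP gC2) (pscal (2 * a) gD),
     rel (pcomm gK gC1) (pscal b gC2),
     rel (pcomm gK gC2) (psub (pscal a gC1) (pscal (a * b) (pmul ptau (pmul gD gD)))),
     rel (pcomm gH gC2) (padd (pmul (pexp (-1) Hg) gK) (pmul gK (pexp (-1) Hg))),
     rel (pcomm gP gC1) (psub (pscal (-2) gK) (pscal b (pmul ptau (padd (pmul gD gP) (pmul gP gD))))),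
     rel (pcomm gC1 gC2) (pscal (- b) (pmul ptau (padd (pmul gD gC2) (pmul gC2 gD))))}"

definition rels_sigma :: "real \<Rightarrow> real \<Rightarrow> ncps set" where
  "rels_sigma a b = {
     rel (pcomm gK gH) (pscal b (pdivt (psub (pexp 1 Pg) pone))),
     rel (pcomm gK gP) (pscal a (pmul (pexp (-1) Pg) gH)),
     rel (pcomm gH gP) pzero,
     rel (pcomm gK gD) pzero,
     rel (pcomm gD gH) gH,
     rel (pcomm gD gC1) (pscal (-1) gC1),
     rel (pcomm gH gC1) (pscal (-2 * b) gD),
     rel (pcomm gD gP) (pdivt (psub pone (pexp (-1) Pg))),
     rel (pcomm gD gC2) (psub (pscal (-1) gC2) (pscal a (pmul ptau (pmul gD gD)))),
     rel (pcomm gP gC2) (pscal (2 * a) gD),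
     rel (pcomm gK gC1) (padd (pscal b gC2) (pscal (a * b) (pmul ptau (pmul gD gD)))),
     rel (pcomm gK gC2) (pscal a gC1),
     rel (pcomm gP gC1) (psub (pscal (-1) (pmul (pexp (-1) Pg) gK)) (pmul gK (pexp (-1) Pg))),
     rel (pcomm gH gC2) (padd (pscal 2 gK) (pscal a (pmul ptau (padd (pmul gD gH) (pmul gH gD))))),
     rel (pcomm gC1 gC2) (pscal (- a) (pmul ptau (padd (pmul gD gC1) (pmul gC1 gD))))}"

fun cop_tau :: "real \<Rightarrow> real \<Rightarrow> gen \<Rightarrow> ncps2" where
  "cop_tau a b Hg = padd2 (tens pone gH) (tens gH pone)"
| "cop_tau a b Dg = padd2 (tens pone gD) (tens gD (pexp (-1) Hg))"
| "cop_tau a b Pg = padd2 (tens pone gP) (tens gP (pexp 1 Hg))"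
| "cop_tau a b C1g = padd2 (tens pone gC1) (tens gC1 (pexp (-1) Hg))"
| "cop_tau a b Kg = psub2 (padd2 (tens pone gK) (tens gK pone))
                        (tens (pscal b (pmul ptau gD)) (pmul (pexp (-1) Hg) gP))"
| "cop_tau a b C2g = psub2 (padd2 (padd2 (tens pone gC2) (tens gC2 (pexp (-1) Hg)))
                                  (tens (pscal 2 (pmul ptau gD)) (pmul (pexp (-1) Hg) gK)))
                          (tens (pscal b (pmul ptau (pmul ptau (padd (pmul gD gD) gD))))
                                (pmul (pexp (-2) Hg) gP))"

fun cop_sigma :: "real \<Rightarrow> real \<Rightarrow> gen \<Rightarrow> ncps2" where
  "cop_sigma a b Pg = padd2 (tens pone gP) (tens gP pone)"
| "cop_sigma a b Dg = padd2 (tens pone gD) (tens gD (pexp (-1) Pg))"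
| "cop_sigma a b Hg = padd2 (tens pone gH) (tens gH (pexp 1 Pg))"
| "cop_sigma a b C2g = padd2 (tens pone gC2) (tens gC2 (pexp (-1) Pg))"
| "cop_sigma a b Kg = psub2 (padd2 (tens pone gK) (tens gK pone))
                        (tens (pscal a (pmul ptau gD)) (pmul (pexp (-1) Pg) gH))"
| "cop_sigma a b C1g = padd2 (psub2 (padd2 (tens pone gC1) (tens gC1 (pexp (-1) Pg)))
                                  (tens (pscal 2 (pmul ptau gD)) (pmul (pexp (-1) Pg) gK)))
                          (tens (pscal a (pmul ptau (pmul ptau (padd (pmul gD gD) gD))))
                                (pmul (pexp (-2) Pg) gH))"

fun swap_assign :: "gen \<Rightarrow> ncps" where
  "swap_assign Hg = gP"
| "swap_assign Pg = gH"
| "swap_assign Kg = gK"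
| "swap_assign Dg = gD"
| "swap_assign C1g = pscal (-1) gC2"
| "swap_assign C2g = pscal (-1) gC1"

end

theory Submission
  imports Defs
begin

(*
  The assignment is a signed relabelling of words: H and P are exchanged, so are C1 and C2,
  K and D are fixed, and a word is multiplied by (-1) to the number of its letters C1, C2.
  Acting coefficientwise on formal series, this is an involutive algebra automorphism of the
  completed free algebra that commutes with t, with division by t and with t-adic limits, and it
  is the extension ext1 of the assignment. It sends each defining relator of U_tau(so_{mu,nu}) to
  plus or minus a defining relator of U_sigma(so_{nu,mu}), and conversely, so it maps each closed
  relation ideal into the other and induces mutually inverse maps between the quotients. On
  generators it carries the tau-coproduct to the sigma-coproduct of the image, up to the same
  sign, so the coproducts are intertwined exactly, already on the free algebra.
*)

definition monom :: "gen list \<Rightarrow> real \<Rightarrow> ncps" where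
  "monom u c = (\<lambda>n v. if n = 0 \<and> v = u then c else 0)"

lemma pgen_eq_monom: "pgen g = monom [g] 1"
  by (simp add: pgen_def monom_def)

lemma pone_eq_monom: "pone = monom [] 1"
  by (simp add: pone_def monom_def)

lemma pscal_monom: "pscal c (monom u d) = monom u (c * d)"
  by (auto simp: pscal_def monom_def fun_eq_iff)

lemma pmul_monom: "pmul (monom u c) (monom v d) = monom (u @ v) (c * d)"
proof (intro ext)
  fix n w
  have split_eq: "(take k w = u \<and> drop k w = v) \<longleftrightarrow> (k = length u \<and> w = u @ v)"
    if "k \<le> length w" for k
    using that by (metis append_eq_conv_conj append_take_drop_id length_take min_absorb2)
  have "pmul (monom u c) (monom v d) n w =
      (\<Sum>i\<le>n. \<Sum>k\<le>length w. if i = 0 \<and> n = 0 \<and> k = length u \<and> w = u @ v then c * d else 0)"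
    unfolding pmul_def monom_def by (intro sum.cong refl) (auto simp: split_eq)
  also have "\<dots> = monom (u @ v) (c * d) n w"
    by (auto simp: monom_def sum.delta if_distrib cong: if_cong)
  finally show "pmul (monom u c) (monom v d) n w = monom (u @ v) (c * d) n w" .
qed

lemma wordval_monom:
  "wordval (\<lambda>g. monom [s g] (e g)) w = monom (map s w) (\<Prod>g\<leftarrow>w. e g)"
  by (induction w) (simp_all add: wordval_def pone_eq_monom pmul_monom)

lemma padd_pzero_left [simp]: "padd pzero F = F"
  by (simp add: padd_def pzero_def)

lemma pscal_one: "pscal 1 X = X"
  by (simp add: pscal_def)

lemma pscal_padd: "pscal c (padd X Y) = padd (pscal c X) (pscal c Y)"
  by (simp add: pscal_def padd_def algebra_simps)

lemma pscal_pzero [simp]: "pscal c pzero = pzero"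
  by (simp add: pscal_def pzero_def)

lemma pmul_pscal_left [simp]: "pmul (pscal c X) Y = pscal c (pmul X Y)"
  by (simp add: pmul_def pscal_def sum_distrib_left mult.assoc)

lemma pmul_pscal_right [simp]: "pmul X (pscal c Y) = pscal c (pmul X Y)"
  by (simp add: pmul_def pscal_def sum_distrib_left algebra_simps)

lemma pmul_padd_left: "pmul (padd X Y) Z = padd (pmul X Z) (pmul Y Z)"
  by (simp add: pmul_def padd_def sum.distrib algebra_simps)

lemma pmul_padd_right: "pmul Z (padd X Y) = padd (pmul Z X) (pmul Z Y)"
  by (simp add: pmul_def padd_def sum.distrib algebra_simps)

lemma pmul_psub_left: "pmul (psub X Y) Z = psub (pmul X Z) (pmul Y Z)"
  by (simp add: pmul_def psub_def sum_subtractf algebra_simps)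

lemma pmul_psub_right: "pmul Z (psub X Y) = psub (pmul Z X) (pmul Z Y)"
  by (simp add: pmul_def psub_def sum_subtractf algebra_simps)

definition pscal2 :: "real \<Rightarrow> ncps2 \<Rightarrow> ncps2" where
  "pscal2 c F = (\<lambda>n u v. c * F n u v)"

lemma pscal2_one [simp]: "pscal2 1 X = X"
  by (simp add: pscal2_def)

lemma pscal2_pscal2 [simp]: "pscal2 c (pscal2 d X) = pscal2 (c * d) X"
  by (simp add: pscal2_def mult.assoc)

lemma tens_pscal_left [simp]: "tens (pscal c X) Y = pscal2 c (tens X Y)"
  by (simp add: tens_def pscal_def pscal2_def sum_distrib_left algebra_simps)

lemma tens_pscal_right [simp]: "tens X (pscal c Y) = pscal2 c (tens X Y)"
  by (simp add: tens_def pscal_def pscal2_def sum_distrib_left algebra_simps)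

lemma pmul2_pscal2_left [simp]: "pmul2 (pscal2 c X) Y = pscal2 c (pmul2 X Y)"
  by (simp add: pmul2_def pscal2_def sum_distrib_left algebra_simps)

lemma pmul2_pscal2_right [simp]: "pmul2 X (pscal2 c Y) = pscal2 c (pmul2 X Y)"
  by (simp add: pmul2_def pscal2_def sum_distrib_left algebra_simps)

lemma Alg_subset: "(\<And>n. {w. F n w \<noteq> 0} \<subseteq> S n) \<Longrightarrow> (\<And>n. finite (S n)) \<Longrightarrow> F \<in> Alg"
  unfolding Alg_def by (blast intro: finite_subset)

lemma Alg_padd [simp]: "X \<in> Alg \<Longrightarrow> Y \<in> Alg \<Longrightarrow> padd X Y \<in> Alg"
  by (rule Alg_subset[where S = "\<lambda>n. {w. X n w \<noteq> 0} \<union> {w. Y n w \<noteq> 0}"])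
     (auto simp: padd_def Alg_def)

lemma Alg_pscal [simp]: "X \<in> Alg \<Longrightarrow> pscal c X \<in> Alg"
  by (rule Alg_subset[where S = "\<lambda>n. {w. X n w \<noteq> 0}"]) (auto simp: pscal_def Alg_def)

lemma Alg_monom [simp]: "monom u c \<in> Alg"
  by (rule Alg_subset[where S = "\<lambda>n. {u}"]) (auto simp: monom_def)

lemma Alg_pone [simp]: "pone \<in> Alg"
  by (simp add: pone_eq_monom)

lemma Alg_pgen [simp]: "pgen g \<in> Alg"
  by (simp add: pgen_eq_monom)

lemma Alg_ptau [simp]: "ptau \<in> Alg"
  by (rule Alg_subset[where S = "\<lambda>n. {[]}"]) (auto simp: ptau_def)

lemma Alg_pexp [simp]: "pexp c g \<in> Alg"
  by (rule Alg_subset[where S = "\<lambda>n. {replicate n g}"]) (auto simp: pexp_def)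

lemma Alg_pmul [simp]:
  assumes "X \<in> Alg" "Y \<in> Alg"
  shows "pmul X Y \<in> Alg"
proof (rule Alg_subset)
  fix n
  show "{w. pmul X Y n w \<noteq> 0} \<subseteq>
      (\<Union>i\<le>n. (\<lambda>(u, v). u @ v) ` ({w. X i w \<noteq> 0} \<times> {w. Y (n - i) w \<noteq> 0}))"
  proof
    fix w assume "w \<in> {w. pmul X Y n w \<noteq> 0}"
    then obtain i k where "i \<le> n" "X i (take k w) * Y (n - i) (drop k w) \<noteq> 0"
      unfolding pmul_def by (auto elim!: sum.not_neutral_contains_not_neutral)
    then show "w \<in> (\<Union>i\<le>n. (\<lambda>(u, v). u @ v) ` ({w. X i w \<noteq> 0} \<times> {w. Y (n - i) w \<noteq> 0}))"
      by (auto intro!: bexI[of _ i] image_eqI[of _ _ "(take k w, drop k w)"])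
  qed
  show "finite (\<Union>i\<le>n. (\<lambda>(u, v). u @ v) ` ({w. X i w \<noteq> 0} \<times> {w. Y (n - i) w \<noteq> 0}))"
    using assms by (auto simp: Alg_def)
qed

lemma Alg2_subset:
  "(\<And>n. {(u, v). F n u v \<noteq> 0} \<subseteq> S n) \<Longrightarrow> (\<And>n. finite (S n)) \<Longrightarrow> F \<in> Alg2"
  unfolding Alg2_def by (blast intro: finite_subset)

lemma Alg2_padd2 [simp]: "X \<in> Alg2 \<Longrightarrow> Y \<in> Alg2 \<Longrightarrow> padd2 X Y \<in> Alg2"
  by (rule Alg2_subset[where S = "\<lambda>n. {(u, v). X n u v \<noteq> 0} \<union> {(u, v). Y n u v \<noteq> 0}"])
     (auto simp: padd2_def Alg2_def)

lemma Alg2_psub2 [simp]: "X \<in> Alg2 \<Longrightarrow> Y \<in> Alg2 \<Longrightarrow> psub2 X Y \<in> Alg2"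
  by (rule Alg2_subset[where S = "\<lambda>n. {(u, v). X n u v \<noteq> 0} \<union> {(u, v). Y n u v \<noteq> 0}"])
     (auto simp: psub2_def Alg2_def)

lemma Alg2_pscal2 [simp]: "X \<in> Alg2 \<Longrightarrow> pscal2 c X \<in> Alg2"
  by (rule Alg2_subset[where S = "\<lambda>n. {(u, v). X n u v \<noteq> 0}"]) (auto simp: pscal2_def Alg2_def)

lemma Alg2_tens [simp]:
  assumes "X \<in> Alg" "Y \<in> Alg"
  shows "tens X Y \<in> Alg2"
proof (rule Alg2_subset)
  fix n
  show "{(u, v). tens X Y n u v \<noteq> 0} \<subseteq> (\<Union>i\<le>n. {w. X i w \<noteq> 0} \<times> {w. Y (n - i) w \<noteq> 0})"
    unfolding tens_def by (auto elim!: sum.not_neutral_contains_not_neutral)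
  show "finite (\<Union>i\<le>n. {w. X i w \<noteq> 0} \<times> {w. Y (n - i) w \<noteq> 0})"
    using assms by (auto simp: Alg_def)
qed

lemma Alg2_pone2 [simp]: "pone2 \<in> Alg2"
  by (simp add: pone2_def)

lemma Alg2_pmul2 [simp]:
  assumes "X \<in> Alg2" "Y \<in> Alg2"
  shows "pmul2 X Y \<in> Alg2"
proof (rule Alg2_subset)
  fix n
  let ?cat = "\<lambda>((u, v), (u', v')). (u @ u', v @ v')"
  let ?S = "\<Union>i\<le>n. ?cat ` ({(u, v). X i u v \<noteq> 0} \<times> {(u, v). Y (n - i) u v \<noteq> 0})"
  show "{(u, v). pmul2 X Y n u v \<noteq> 0} \<subseteq> ?S"
  proof clarify
    fix u v assume "pmul2 X Y n u v \<noteq> 0"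
    then obtain i k l where "i \<le> n"
      "X i (take k u) (take l v) * Y (n - i) (drop k u) (drop l v) \<noteq> 0"
      unfolding pmul2_def by (auto elim!: sum.not_neutral_contains_not_neutral)
    then show "(u, v) \<in> ?S"
      by (auto intro!: bexI[of _ i]
          image_eqI[of _ _ "((take k u, take l v), (drop k u, drop l v))"])
  qed
  show "finite ?S"
    using assms by (auto simp: Alg2_def)
qed

lemma Alg2_ext2:
  assumes "\<And>g. f g \<in> Alg2" and "x \<in> Alg"
  shows "ext2 f x \<in> Alg2"
proof (rule Alg2_subset)
  fix m
  let ?S = "\<Union>n\<le>m. \<Union>w\<in>{w. x n w \<noteq> 0}. {(u, v). wordval2 f w (m - n) u v \<noteq> 0}"
  show "{(u, v). ext2 f x m u v \<noteq> 0} \<subseteq> ?S"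
    unfolding ext2_def by (fastforce elim!: sum.not_neutral_contains_not_neutral)
  have "wordval2 f w \<in> Alg2" for w
    by (induction w) (simp_all add: wordval2_def assms(1))
  then show "finite ?S"
    using assms(2) by (auto simp: Alg_def Alg2_def)
qed

section \<open>Signed relabelling of words\<close>

definition relabel :: "(gen \<Rightarrow> gen) \<Rightarrow> (gen \<Rightarrow> real) \<Rightarrow> ncps \<Rightarrow> ncps" where
  "relabel s e F = (\<lambda>n v. (\<Prod>g\<leftarrow>v. e g) * F n (map s v))"

lemma relabel_padd [simp]: "relabel s e (padd X Y) = padd (relabel s e X) (relabel s e Y)"
  by (simp add: relabel_def padd_def algebra_simps)

lemma relabel_psub [simp]: "relabel s e (psub X Y) = psub (relabel s e X) (relabel s e Y)"
  by (simp add: relabel_def psub_def algebra_simps)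

lemma relabel_pscal [simp]: "relabel s e (pscal c X) = pscal c (relabel s e X)"
  by (simp add: relabel_def pscal_def algebra_simps)

lemma relabel_pzero [simp]: "relabel s e pzero = pzero"
  by (simp add: relabel_def pzero_def)

lemma relabel_pone [simp]: "relabel s e pone = pone"
  by (auto simp: relabel_def pone_def fun_eq_iff)

lemma relabel_ptau [simp]: "relabel s e ptau = ptau"
  by (auto simp: relabel_def ptau_def fun_eq_iff)

lemma relabel_pdivt [simp]: "relabel s e (pdivt X) = pdivt (relabel s e X)"
  by (simp add: relabel_def pdivt_def)

lemma relabel_pmul [simp]: "relabel s e (pmul X Y) = pmul (relabel s e X) (relabel s e Y)"
proof (intro ext)
  fix n w
  have "(\<Prod>g\<leftarrow>w. e g) * (X i (take k (map s w)) * Y j (drop k (map s w))) =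
      relabel s e X i (take k w) * relabel s e Y j (drop k w)" for i j k
  proof -
    have "(\<Prod>g\<leftarrow>w. e g) = (\<Prod>g\<leftarrow>take k w. e g) * (\<Prod>g\<leftarrow>drop k w. e g)"
      by (metis append_take_drop_id map_append prod_list.append)
    then show ?thesis by (simp add: relabel_def take_map drop_map)
  qed
  then show "relabel s e (pmul X Y) n w = pmul (relabel s e X) (relabel s e Y) n w"
    by (simp add: relabel_def pmul_def sum_distrib_left)
qed

lemma relabel_pcomm [simp]: "relabel s e (pcomm X Y) = pcomm (relabel s e X) (relabel s e Y)"
  by (simp add: pcomm_def)

definition relabel2 :: "(gen \<Rightarrow> gen) \<Rightarrow> (gen \<Rightarrow> real) \<Rightarrow> ncps2 \<Rightarrow> ncps2" where
  "relabel2 s e F = (\<lambda>n u v. (\<Prod>g\<leftarrow>u. e g) * (\<Prod>g\<leftarrow>v. e g) * F n (map s u) (map s v))"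

lemma relabel2_padd2 [simp]: "relabel2 s e (padd2 X Y) = padd2 (relabel2 s e X) (relabel2 s e Y)"
  by (simp add: relabel2_def padd2_def algebra_simps)

lemma relabel2_psub2 [simp]: "relabel2 s e (psub2 X Y) = psub2 (relabel2 s e X) (relabel2 s e Y)"
  by (simp add: relabel2_def psub2_def algebra_simps)

lemma relabel2_pscal2 [simp]: "relabel2 s e (pscal2 c X) = pscal2 c (relabel2 s e X)"
  by (simp add: relabel2_def pscal2_def algebra_simps)

lemma relabel2_tens [simp]: "relabel2 s e (tens X Y) = tens (relabel s e X) (relabel s e Y)"
  by (simp add: relabel2_def tens_def relabel_def sum_distrib_left algebra_simps)

lemma relabel2_pone2 [simp]: "relabel2 s e pone2 = pone2"
  by (simp add: pone2_def)

lemma relabel2_pmul2 [simp]: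
  "relabel2 s e (pmul2 X Y) = pmul2 (relabel2 s e X) (relabel2 s e Y)"
proof (intro ext)
  fix n u v
  have prod_split: "(\<Prod>g\<leftarrow>w. e g) = (\<Prod>g\<leftarrow>take k w. e g) * (\<Prod>g\<leftarrow>drop k w. e g)" for k w
    by (metis append_take_drop_id map_append prod_list.append)
  have "(\<Prod>g\<leftarrow>u. e g) * (\<Prod>g\<leftarrow>v. e g) *
      (X i (take k (map s u)) (take l (map s v)) * Y j (drop k (map s u)) (drop l (map s v))) =
      relabel2 s e X i (take k u) (take l v) * relabel2 s e Y j (drop k u) (drop l v)" for i j k l
    by (simp add: relabel2_def take_map drop_map prod_split[of u k] prod_split[of v l])
  then show "relabel2 s e (pmul2 X Y) n u v = pmul2 (relabel2 s e X) (relabel2 s e Y) n u v"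
    by (simp add: relabel2_def pmul2_def sum_distrib_left)
qed

lemma relabel2_wordval2:
  assumes "\<And>g. relabel2 s e (f g) = pscal2 (e g) (f' (s g))"
  shows "relabel2 s e (wordval2 f w) = pscal2 (\<Prod>g\<leftarrow>w. e g) (wordval2 f' (map s w))"
  by (induction w) (simp_all add: wordval2_def assms mult.commute)

locale signed_involution =
  fixes s :: "gen \<Rightarrow> gen" and e :: "gen \<Rightarrow> real"
  assumes involution [simp]: "s (s g) = g"
    and sign_invariant [simp]: "e (s g) = e g"
    and sign_square [simp]: "e g * e g = 1"
begin

lemma involution_comp [simp]: "s \<circ> s = id"
  by (simp add: fun_eq_iff)

lemma sign_comp [simp]: "e \<circ> s = e"
  by (simp add: fun_eq_iff)

lemma map_involution: "map s (map s v) = v"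
  by simp

lemma map_eq_iff: "map s u = v \<longleftrightarrow> u = map s v"
  by auto

lemma word_sign_square [simp]: "(\<Prod>g\<leftarrow>v. e g) * (\<Prod>g\<leftarrow>v. e g) = 1"
proof (induction v)
  case (Cons g v)
  have "(\<Prod>h\<leftarrow>g # v. e h) * (\<Prod>h\<leftarrow>g # v. e h) = (e g * e g) * ((\<Prod>h\<leftarrow>v. e h) * (\<Prod>h\<leftarrow>v. e h))"
    by (simp add: ac_simps)
  then show ?case
    using Cons.IH by simp
qed simp

lemma word_sign_nonzero [simp]: "(\<Prod>g\<leftarrow>v. e g) \<noteq> 0"
  by (metis mult_zero_left word_sign_square zero_neq_one)

lemma relabel_relabel [simp]: "relabel s e (relabel s e F) = F"
  by (simp add: relabel_def mult.assoc[symmetric])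

lemma relabel_eq_pscal_sym:
  assumes "relabel s e r = pscal c r'" and "c \<in> {1, -1}"
  shows "relabel s e r' = pscal c r"
proof -
  have "r = pscal c (relabel s e r')"
    using arg_cong[OF assms(1), of "relabel s e"] by simp
  then show ?thesis
    using assms(2) by (auto simp: pscal_def)
qed

lemma support_relabel: "{v. relabel s e F n v \<noteq> 0} = map s ` {w. F n w \<noteq> 0}"
  by (auto simp: relabel_def image_iff) (metis map_involution)

lemma Alg_relabel [simp]: "F \<in> Alg \<Longrightarrow> relabel s e F \<in> Alg"
  by (simp add: Alg_def support_relabel)

lemma relabel_monom: "relabel s e (monom u c) = monom (map s u) (c * (\<Prod>g\<leftarrow>u. e g))"
  by (auto simp: relabel_def monom_def fun_eq_iff map_eq_iff)

lemma relabel_pgen [simp]: "relabel s e (pgen g) = pscal (e g) (pgen (s g))"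
  by (simp add: pgen_eq_monom relabel_monom pscal_monom)

lemma relabel_pexp: "e g = 1 \<Longrightarrow> relabel s e (pexp c g) = pexp c (s g)"
  by (auto simp: relabel_def pexp_def fun_eq_iff map_eq_iff prod_list_replicate)

lemma ext1_eq_relabel:
  assumes "F \<in> Alg"
  shows "ext1 (\<lambda>g. monom [s g] (e g)) F = relabel s e F"
proof (intro ext)
  fix m v
  have "ext1 (\<lambda>g. monom [s g] (e g)) F m v =
      (\<Sum>n\<le>m. if n = m
         then \<Sum>w\<in>{w. F n w \<noteq> 0}. if w = map s v then F n w * (\<Prod>g\<leftarrow>w. e g) else 0
         else 0)"
    unfolding ext1_def wordval_monom unfolding monom_def
    by (intro sum.cong refl) (auto simp: map_eq_iff intro!: sum.cong)
  also have "\<dots> = relabel s e F m v"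
    using assms by (simp add: Alg_def sum.delta' relabel_def)
  finally show "ext1 (\<lambda>g. monom [s g] (e g)) F m v = relabel s e F m v" .
qed

lemma tensext_eq_relabel2:
  assumes "F \<in> Alg2"
  shows "tensext (\<lambda>g. monom [s g] (e g)) F = relabel2 s e F"
proof (intro ext)
  fix m a b
  have tens_monom: "tens (monom u c) (monom v d) k a b = (if k = 0 \<and> a = u \<and> b = v then c * d else 0)"
    for u v c d k
    by (auto simp: tens_def monom_def intro!: sum.neutral)
  have "tensext (\<lambda>g. monom [s g] (e g)) F m a b =
      (\<Sum>n\<le>m. if n = m then \<Sum>p\<in>{(u, v). F n u v \<noteq> 0}.
          if p = (map s a, map s b)
          then F n (fst p) (snd p) * ((\<Prod>g\<leftarrow>fst p. e g) * (\<Prod>g\<leftarrow>snd p. e g))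
          else 0
        else 0)"
    unfolding tensext_def wordval_monom unfolding tens_monom
    by (intro sum.cong refl) (auto simp: map_eq_iff intro!: sum.cong)
  also have "\<dots> = relabel2 s e F m a b"
    using assms by (simp add: Alg2_def sum.delta' relabel2_def)
  finally show "tensext (\<lambda>g. monom [s g] (e g)) F m a b = relabel2 s e F m a b" .
qed

lemma relabel2_ext2:
  assumes "\<And>g. relabel2 s e (f g) = pscal2 (e g) (f' (s g))" and "x \<in> Alg"
  shows "relabel2 s e (ext2 f x) = ext2 f' (relabel s e x)"
proof (intro ext)
  fix m u v
  have word: "(\<Prod>g\<leftarrow>u. e g) * (\<Prod>g\<leftarrow>v. e g) * wordval2 f w k (map s u) (map s v) =
      (\<Prod>g\<leftarrow>w. e g) * wordval2 f' (map s w) k u v" for w k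
    using fun_cong[OF relabel2_wordval2[OF assms(1), of w]]
    by (simp add: relabel2_def pscal2_def fun_eq_iff)
  have inj: "inj_on (map s) A" for A
    by (rule inj_onI) (metis map_involution)
  have "relabel2 s e (ext2 f x) m u v =
      (\<Sum>n\<le>m. \<Sum>w\<in>{w. x n w \<noteq> 0}. x n w * ((\<Prod>g\<leftarrow>w. e g) * wordval2 f' (map s w) (m - n) u v))"
    unfolding relabel2_def ext2_def sum_distrib_left
    by (intro sum.cong refl) (simp add: word[symmetric] algebra_simps)
  also have "\<dots> = (\<Sum>n\<le>m. \<Sum>w\<in>map s ` {w. x n w \<noteq> 0}. relabel s e x n w * wordval2 f' w (m - n) u v)"
    by (simp add: sum.reindex[OF inj] relabel_def algebra_simps)
  also have "\<dots> = ext2 f' (relabel s e x) m u v"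
    by (simp add: ext2_def support_relabel)
  finally show "relabel2 s e (ext2 f x) m u v = ext2 f' (relabel s e x) m u v" .
qed

end

section \<open>Closed ideals and congruences\<close>

definition scaled :: "ncps set \<Rightarrow> ncps set" where
  "scaled R = {pscal c r | c r. r \<in> R}"

lemma scaledI [intro]: "r \<in> R \<Longrightarrow> pscal c r \<in> scaled R"
  unfolding scaled_def by blast

lemma ideal_span_padd:
  "F \<in> ideal_span R \<Longrightarrow> G \<in> ideal_span R \<Longrightarrow> padd F G \<in> ideal_span R"
proof (induction F rule: ideal_span.induct)
  case (step a r b F)
  have "padd (padd (pmul (pmul a r) b) F) G = padd (pmul (pmul a r) b) (padd F G)"
    by (simp add: padd_def add.assoc)
  then show ?case
    using step by (simp add: ideal_span.step)
qed simp

lemma ideal_span_pscal: "F \<in> ideal_span R \<Longrightarrow> pscal c F \<in> ideal_span R"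
proof (induction F rule: ideal_span.induct)
  case (step a r b F)
  have "pscal c (padd (pmul (pmul a r) b) F) = padd (pmul (pmul (pscal c a) r) b) (pscal c F)"
    by (simp add: pscal_padd)
  then show ?case
    using step by (simp only:) (intro ideal_span.step, simp_all)
qed (simp add: ideal_span.zero)

lemma relideal_pzero: "pzero \<in> relideal R"
  unfolding relideal_def tclosure_def
  by (auto intro!: bexI[of _ pzero] ideal_span.zero simp: Alg_def pzero_def)

lemma relideal_padd: "F \<in> relideal R \<Longrightarrow> G \<in> relideal R \<Longrightarrow> padd F G \<in> relideal R"
  unfolding relideal_def tclosure_def
  by (simp, metis (no_types, lifting) ideal_span_padd padd_def)

lemma relideal_pscal: "F \<in> relideal R \<Longrightarrow> pscal c F \<in> relideal R"
  unfolding relideal_def tclosure_def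
  by (simp, metis (no_types, lifting) ideal_span_pscal pscal_def)

lemma equiv_congr: "equiv Alg (congr R)"
proof (rule equivI)
  show "congr R \<subseteq> Alg \<times> Alg"
    by (auto simp: congr_def)
  show "refl_on Alg (congr R)"
  proof (rule refl_onI)
    fix x assume "x \<in> Alg"
    moreover have "psub x x = pzero"
      by (simp add: psub_def pzero_def)
    ultimately show "(x, x) \<in> congr R"
      by (simp add: congr_def relideal_pzero)
  qed
  show "sym (congr R)"
  proof (rule symI)
    fix x y assume "(x, y) \<in> congr R"
    moreover have "psub y x = pscal (-1) (psub x y)"
      by (simp add: psub_def pscal_def)
    ultimately show "(y, x) \<in> congr R"
      by (simp add: congr_def relideal_pscal)
  qed
  show "trans (congr R)"
  proof (rule transI)
    fix x y z assume "(x, y) \<in> congr R" "(y, z) \<in> congr R"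
    moreover have "psub x z = padd (psub x y) (psub y z)"
      by (simp add: psub_def padd_def)
    ultimately show "(x, z) \<in> congr R"
      by (simp add: congr_def relideal_padd)
  qed
qed

context signed_involution
begin

lemma ideal_span_relabel:
  assumes "relabel s e ` R \<subseteq> scaled R'" and "F \<in> ideal_span R"
  shows "relabel s e F \<in> ideal_span R'"
  using assms(2)
proof (induction F rule: ideal_span.induct)
  case (step a r b F)
  obtain c r' where "r' \<in> R'" "relabel s e r = pscal c r'"
    using assms(1) step.hyps(2) unfolding scaled_def by blast
  moreover have "relabel s e (padd (pmul (pmul a r) b) F) =
      padd (pmul (pmul (pscal c (relabel s e a)) r') (relabel s e b)) (relabel s e F)"
    using \<open>relabel s e r = pscal c r'\<close> by simp
  ultimately show ?case
    using step by (simp only:) (intro ideal_span.step, simp_all)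
qed (simp add: ideal_span.zero)

lemma relideal_relabel:
  assumes "relabel s e ` R \<subseteq> scaled R'" and "F \<in> relideal R"
  shows "relabel s e F \<in> relideal R'"
proof -
  have "\<exists>G'\<in>ideal_span R'. \<forall>n<N. \<forall>w. relabel s e F n w = G' n w" for N
  proof -
    obtain G where "G \<in> ideal_span R" "\<forall>n<N. \<forall>w. F n w = G n w"
      using assms(2) unfolding relideal_def tclosure_def by blast
    then show ?thesis
      using ideal_span_relabel[OF assms(1)] by (auto simp: relabel_def)
  qed
  moreover have "relabel s e F \<in> Alg"
    using assms(2) by (simp add: relideal_def tclosure_def)
  ultimately show ?thesis
    by (simp add: relideal_def tclosure_def)
qed

lemma congr_relabel:
  assumes "relabel s e ` R \<subseteq> scaled R'" and "(x, y) \<in> congr R"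
  shows "(relabel s e x, relabel s e y) \<in> congr R'"
  using assms relideal_relabel[OF assms(1), of "psub x y"] by (simp add: congr_def)

end

lemma psub2_self_tensideal: "psub2 X X \<in> tensideal R"
proof -
  have "psub2 X X = pzero2"
    by (simp add: psub2_def pzero2_def)
  moreover have "pzero2 \<in> Alg2"
    by (simp add: Alg2_def pzero2_def)
  ultimately show ?thesis
    unfolding tensideal_def tclosure2_def by (auto intro: tideal_span.zero)
qed

section \<open>Maps induced on quotients\<close>

lemma Image_image_equiv_class:
  assumes "equiv A r" "equiv A r'" "x \<in> A" and compat: "\<And>x y. (x, y) \<in> r \<Longrightarrow> (f x, f y) \<in> r'"
  shows "r' `` (f ` (r `` {x})) = r' `` {f x}"
proof
  show "r' `` (f ` (r `` {x})) \<subseteq> r' `` {f x}"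
  proof
    fix z assume "z \<in> r' `` (f ` (r `` {x}))"
    then obtain y where "(x, y) \<in> r" "(f y, z) \<in> r'"
      by blast
    then have "(f x, z) \<in> r'"
      using compat assms(2) by (meson equivE transE)
    then show "z \<in> r' `` {f x}"
      by blast
  qed
  show "r' `` {f x} \<subseteq> r' `` (f ` (r `` {x}))"
    using equiv_class_self[OF assms(1,3)] by blast
qed

lemma bij_betw_quotient_involution:
  assumes r: "equiv A r" and r': "equiv A r'"
    and closed: "\<And>x. x \<in> A \<Longrightarrow> f x \<in> A" and involution: "\<And>x. x \<in> A \<Longrightarrow> f (f x) = x"
    and fwd: "\<And>x y. (x, y) \<in> r \<Longrightarrow> (f x, f y) \<in> r'"
    and bwd: "\<And>x y. (x, y) \<in> r' \<Longrightarrow> (f x, f y) \<in> r"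
  shows "bij_betw (\<lambda>X. r' `` (f ` X)) (A // r) (A // r')"
proof (rule bij_betw_byWitness[where f' = "\<lambda>Y. r `` (f ` Y)"])
  have fwd_class: "r' `` (f ` (r `` {x})) = r' `` {f x}" if "x \<in> A" for x
    using Image_image_equiv_class[OF r r' that fwd] .
  have bwd_class: "r `` (f ` (r' `` {x})) = r `` {f x}" if "x \<in> A" for x
    using Image_image_equiv_class[OF r' r that bwd] .
  show "\<forall>X\<in>A // r. r `` (f ` (r' `` (f ` X))) = X"
    by (metis quotientE fwd_class bwd_class closed involution)
  show "\<forall>Y\<in>A // r'. r' `` (f ` (r `` (f ` Y))) = Y"
    by (metis quotientE fwd_class bwd_class closed involution)
  show "(\<lambda>X. r' `` (f ` X)) ` (A // r) \<subseteq> A // r'"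
    by (auto elim!: quotientE simp only: fwd_class intro!: quotientI closed)
  show "(\<lambda>Y. r `` (f ` Y)) ` (A // r') \<subseteq> A // r"
    by (auto elim!: quotientE simp only: bwd_class intro!: quotientI closed)
qed

section \<open>Exchanging the two presentations\<close>

fun swap_gen :: "gen \<Rightarrow> gen" where
  "swap_gen Hg = Pg" | "swap_gen Pg = Hg" | "swap_gen Kg = Kg" | "swap_gen Dg = Dg"
| "swap_gen C1g = C2g" | "swap_gen C2g = C1g"

fun swap_sign :: "gen \<Rightarrow> real" where
  "swap_sign C1g = -1" | "swap_sign C2g = -1" | "swap_sign Hg = 1" | "swap_sign Pg = 1"
| "swap_sign Kg = 1" | "swap_sign Dg = 1"

interpretation swap: signed_involution swap_gen swap_sign
proof
  fix g
  show "swap_gen (swap_gen g) = g" "swap_sign (swap_gen g) = swap_sign g"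
    "swap_sign g * swap_sign g = 1"
    by (cases g; simp)+
qed

lemma swap_assign_eq_monom: "swap_assign = (\<lambda>g. monom [swap_gen g] (swap_sign g))"
proof
  fix g show "swap_assign g = monom [swap_gen g] (swap_sign g)"
    by (cases g) (simp_all add: pgen_eq_monom pscal_monom)
qed

abbreviation "swap_iso \<equiv> relabel swap_gen swap_sign"

(* Every right-hand side carries its sign, pscal 1 included, so that relabel_eq_pscal_sym
   turns the whole table around at once. *)
lemma swap_iso_relators:
  fixes a b :: real
  shows
  "swap_iso (rel (pcomm gK gH) (pscal b (pmul (pexp (-1) Hg) gP))) =
     pscal 1 (rel (pcomm gK gP) (pscal b (pmul (pexp (-1) Pg) gH)))"
  "swap_iso (rel (pcomm gK gP) (pscal a (pdivt (psub (pexp 1 Hg) pone)))) =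
     pscal 1 (rel (pcomm gK gH) (pscal a (pdivt (psub (pexp 1 Pg) pone))))"
  "swap_iso (rel (pcomm gH gP) pzero) = pscal (-1) (rel (pcomm gH gP) pzero)"
  "swap_iso (rel (pcomm gK gD) pzero) = pscal 1 (rel (pcomm gK gD) pzero)"
  "swap_iso (rel (pcomm gD gH) (pdivt (psub pone (pexp (-1) Hg)))) =
     pscal 1 (rel (pcomm gD gP) (pdivt (psub pone (pexp (-1) Pg))))"
  "swap_iso (rel (pcomm gD gC1) (padd (pscal (-1) gC1) (pscal b (pmul ptau (pmul gD gD))))) =
     pscal (-1) (rel (pcomm gD gC2) (psub (pscal (-1) gC2) (pscal b (pmul ptau (pmul gD gD)))))"
  "swap_iso (rel (pcomm gH gC1) (pscal (-2 * b) gD)) = pscal (-1) (rel (pcomm gP gC2) (pscal (2 * b) gD))"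
  "swap_iso (rel (pcomm gD gP) gP) = pscal 1 (rel (pcomm gD gH) gH)"
  "swap_iso (rel (pcomm gD gC2) (pscal (-1) gC2)) = pscal (-1) (rel (pcomm gD gC1) (pscal (-1) gC1))"
  "swap_iso (rel (pcomm gP gC2) (pscal (2 * a) gD)) = pscal (-1) (rel (pcomm gH gC1) (pscal (-2 * a) gD))"
  "swap_iso (rel (pcomm gK gC1) (pscal b gC2)) = pscal (-1) (rel (pcomm gK gC2) (pscal b gC1))"
  "swap_iso (rel (pcomm gK gC2) (psub (pscal a gC1) (pscal (a * b) (pmul ptau (pmul gD gD))))) =
     pscal (-1) (rel (pcomm gK gC1) (padd (pscal a gC2) (pscal (b * a) (pmul ptau (pmul gD gD)))))"
  "swap_iso (rel (pcomm gH gC2) (padd (pmul (pexp (-1) Hg) gK) (pmul gK (pexp (-1) Hg)))) =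
     pscal (-1) (rel (pcomm gP gC1) (psub (pscal (-1) (pmul (pexp (-1) Pg) gK)) (pmul gK (pexp (-1) Pg))))"
  "swap_iso (rel (pcomm gP gC1) (psub (pscal (-2) gK) (pscal b (pmul ptau (padd (pmul gD gP) (pmul gP gD)))))) =
     pscal (-1) (rel (pcomm gH gC2) (padd (pscal 2 gK) (pscal b (pmul ptau (padd (pmul gD gH) (pmul gH gD))))))"
  "swap_iso (rel (pcomm gC1 gC2) (pscal (- b) (pmul ptau (padd (pmul gD gC2) (pmul gC2 gD))))) =
     pscal (-1) (rel (pcomm gC1 gC2) (pscal (- b) (pmul ptau (padd (pmul gD gC1) (pmul gC1 gD)))))"
  by (simp_all add: rel_def pcomm_def swap.relabel_pexp pmul_padd_left pmul_padd_right
      pmul_psub_left pmul_psub_right,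
      simp_all add: fun_eq_iff padd_def psub_def pscal_def pzero_def algebra_simps)

(* The table is applied by unfolding, not simp: simp would first normalise -2 * b to -(2 * b). *)
lemma swap_iso_rels_tau: "swap_iso ` rels_tau a b \<subseteq> scaled (rels_sigma b a)"
  unfolding rels_tau_def image_insert image_empty swap_iso_relators
  by (auto simp: rels_sigma_def)

lemma swap_iso_rels_sigma: "swap_iso ` rels_sigma b a \<subseteq> scaled (rels_tau a b)"
  unfolding rels_sigma_def image_insert image_empty
  by (simp only: swap_iso_relators[THEN swap.relabel_eq_pscal_sym] insert_iff simp_thms)
     (auto simp: rels_tau_def)

lemma Alg2_cop_tau: "cop_tau a b g \<in> Alg2"
  by (cases g) simp_all

lemma relabel2_swap_cop_tau:
  "relabel2 swap_gen swap_sign (cop_tau a b g) = pscal2 (swap_sign g) (cop_sigma b a (swap_gen g))"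
  by (cases g) (simp_all add: swap.relabel_pexp pscal_one,
      simp_all add: fun_eq_iff padd2_def psub2_def pscal2_def)

theorem mainTheorem7:
  fixes \<mu> \<nu> :: real
  defines "\<phi> \<equiv> ext1 swap_assign"
  defines "Rt \<equiv> rels_tau \<mu> \<nu>"
  defines "Rs \<equiv> rels_sigma \<nu> \<mu>"
  shows
    \<comment> \<open>the extension is a continuous R[[t]]-algebra map on the free completed algebra\<close>
    "(\<forall>x\<in>Alg. \<phi> x \<in> Alg)
     \<and> \<phi> pone = pone
     \<and> (\<forall>x\<in>Alg. \<forall>y\<in>Alg. \<phi> (padd x y) = padd (\<phi> x) (\<phi> y))
     \<and> (\<forall>x\<in>Alg. \<forall>y\<in>Alg. \<phi> (pmul x y) = pmul (\<phi> x) (\<phi> y))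
     \<and> (\<forall>x\<in>Alg. \<phi> (pmul ptau x) = pmul ptau (\<phi> x))
     \<and> (\<forall>g. \<phi> (pgen g) = swap_assign g)
     \<comment> \<open>it descends to the presented algebras\<close>
     \<and> (\<forall>x y. (x, y) \<in> congr Rt \<longrightarrow> (\<phi> x, \<phi> y) \<in> congr Rs)
     \<comment> \<open>and the induced map U_tau(so_{mu,nu}) \<rightarrow> U_sigma(so_{nu,mu}) is bijective\<close>
     \<and> bij_betw (\<lambda>X. congr Rs `` (\<phi> ` X)) (presented Rt) (presented Rs)
     \<comment> \<open>and intertwines the coproducts: (phi \<otimes> phi) o Delta_tau = Delta_sigma o phi on U\<close>
     \<and> (\<forall>x\<in>Alg. psub2 (tensext swap_assign (ext2 (cop_tau \<mu> \<nu>) x))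
                        (ext2 (cop_sigma \<nu> \<mu>) (\<phi> x)) \<in> tensideal Rs)"
proof -
  have \<phi>_eq: "\<phi> x = swap_iso x" if "x \<in> Alg" for x
    unfolding \<phi>_def swap_assign_eq_monom using that by (rule swap.ext1_eq_relabel)
  have fwd: "(swap_iso x, swap_iso y) \<in> congr Rs" if "(x, y) \<in> congr Rt" for x y
    using swap.congr_relabel[OF swap_iso_rels_tau] that unfolding Rt_def Rs_def .
  have bwd: "(swap_iso x, swap_iso y) \<in> congr Rt" if "(x, y) \<in> congr Rs" for x y
    using swap.congr_relabel[OF swap_iso_rels_sigma] that unfolding Rt_def Rs_def .
  have "bij_betw (\<lambda>X. congr Rs `` (swap_iso ` X)) (presented Rt) (presented Rs)"
    unfolding presented_def
    by (rule bij_betw_quotient_involution[OF equiv_congr equiv_congr]) (simp_all add: fwd bwd)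
  moreover have "\<phi> ` X = swap_iso ` X" if "X \<in> presented Rt" for X
    using that by (auto simp: presented_def congr_def quotient_def \<phi>_eq)
  ultimately have bij: "bij_betw (\<lambda>X. congr Rs `` (\<phi> ` X)) (presented Rt) (presented Rs)"
    by (simp cong: bij_betw_cong)
  have "tensext swap_assign (ext2 (cop_tau \<mu> \<nu>) x) = ext2 (cop_sigma \<nu> \<mu>) (\<phi> x)" if "x \<in> Alg" for x
    using that Alg2_ext2[OF Alg2_cop_tau that] swap.relabel2_ext2[OF relabel2_swap_cop_tau that]
    by (simp add: swap_assign_eq_monom swap.tensext_eq_relabel2 \<phi>_eq)
  then show ?thesis
    using bij fwd
    by (simp add: \<phi>_eq congr_def psub2_self_tensideal swap_assign_eq_monom pgen_eq_monom
        swap.relabel_monom)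
qed

end
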